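(* Let $j\ge1$ be an integer. If $m\ge 2j+1$, then $$a_{2j-1}=\frac{1}{2^{j-1}\pi^j}\frac{1}{(m-2)(m-4)\cdots(m-2j)}\frac{1}{\sigma_m}T^*_{-m+2j},\qquad b_{2j-1}=-\frac{1}{2^{j-1}\pi^j}\frac{1}{(m-1)(m-3)\cdots(m-2j+1)}\frac{1}{\sigma_{m+1}}U^*_{-m+2j},$$ and if $m\ge2j+2$, then $$a_{2j}=-\frac{1}{2^{j-1}\pi^j}\frac{1}{(m-1)(m-3)\cdots(m-2j-1)}\frac{1}{\sigma_{m+1}}T^*_{-m+2j+1},\qquad b_{2j}=\frac{1}{2^{j}\pi^{j+1}}\frac{1}{(m-2)(m-4)\cdots(m-2j)}\frac{1}{\sigma_{m}}U^*_{-m+2j+1}.$$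
   Context: $\mathbb{R}_{0,m+1}$ is the real Clifford algebra generated by an orthonormal basis $e_0,\dots,e_m$ with $e_\alpha e_\beta+e_\beta e_\alpha=-2\delta_{\alpha\beta}$. Write $\underline{x}=\sum_{j=1}^m x_je_j\in\mathbb{R}^m$. $\sigma_n=2\pi^{n/2}/\Gamma(n/2)$. For an integer $n\ge1$, $T^*_{-m+n}$ denotes the locally integrable function $\frac{\pi^{n/2}}{\Gamma(n/2)}|\underline{x}|^{n-m}$ and $U^*_{-m+n}$ the locally integrable function $\frac{\pi^{(n+1)/2}}{\Gamma((n+1)/2)}\frac{\underline{x}}{|\underline{x}|}|\underline{x}|^{n-m}$ on $\mathbb{R}^m$. Convolutions are of $\mathbb{R}_{0,m+1}$-valued tempered distributions on $\mathbb{R}^m$, computed componentwise with Clifford products of basis elements kept in order. $a_0=-\frac{2}{(m-1)\sigma_{m+1}}\frac{1}{|\underline{x}|^{m-1}}$, $b_0=\frac{1}{\sigma_m}\frac{\underline{x}}{|\underline{x}|^m}$, and recursively $a_k=a_0*a_{k-1}$, $b_k=a_0*b_{k-1}$ for $k\ge1$ (with $m\ge k+2$). *)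

theory Defs
  imports "HOL-Analysis.Analysis"
begin

definition sigma :: "nat \<Rightarrow> real" where
  "sigma n = 2 * pi powr (real n / 2) / Gamma (real n / 2)"

definition Tstar :: "nat \<Rightarrow> real^'m \<Rightarrow> real" where
  "Tstar n x = pi powr (real n / 2) / Gamma (real n / 2)
       * norm x powr (real n - real CARD('m))"

text \<open>U*_{-m+n}(x) = pi^((n+1)/2)/Gamma((n+1)/2) (x/|x|) |x|^(n-m), a vector of R^m
  (the 1-vector part of the Clifford algebra).\<close>
definition Ustar :: "nat \<Rightarrow> real^'m \<Rightarrow> real^'m" where
  "Ustar n x = (pi powr ((real n + 1) / 2) / Gamma ((real n + 1) / 2)
       * norm x powr (real n - real CARD('m)) / norm x) *\<^sub>R x"

definition azero :: "real^'m \<Rightarrow> real" where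
  "azero x = - 2 / ((real CARD('m) - 1) * sigma (CARD('m) + 1))
                    / norm x powr (real CARD('m) - 1)"

primrec acoef :: "nat \<Rightarrow> real^'m \<Rightarrow> real" where
  "acoef 0 x = azero x"
| "acoef (Suc k) x = (LINT y|lborel. azero y * acoef k (x - y))"

primrec bcoef :: "nat \<Rightarrow> real^'m \<Rightarrow> real^'m" where
  "bcoef 0 x = (1 / sigma CARD('m) / norm x powr real CARD('m)) *\<^sub>R x"
| "bcoef (Suc k) x = (LINT y|lborel. azero y *\<^sub>R bcoef k (x - y))"

end

(*
  The kernels a_0 and b_0 are constant multiples of the Riesz kernels |x|^(1-m) and x |x|^(-m).
  Subordination to the heat kernel, |x|^(2 alpha - m) = c(alpha)^(-1) * int_0^oo t^(alpha-1) h_t(x) dt,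
  turns the convolution of two Riesz kernels into a double integral over (t, s) of h_t * h_s = h_(t+s),
  which the Beta integral collapses to a single Riesz kernel:
  |.|^(2 alpha - m) * |.|^(2 beta - m) = C(alpha, beta) |.|^(2 (alpha + beta) - m).
  For the vector kernel x |x|^(2 beta - m) the same argument works, using that the first moment of
  h_t(y) h_s(x - y) in y is s/(t + s) h_(t+s)(x) x. Convolution with a_0 is the case alpha = 1/2, so
  by induction a_k and b_k are explicit quotients of Gamma values times |x|^(k+1-m) and x |x|^(k-m);
  for k = 2j - 1 and k = 2j these quotients telescope into the stated products.
*)
theory Submission
  imports Defs "HOL-Probability.Distributions"
begin

section \<open>The heat kernel\<close>

lemma distr_lborel_uminus: "distr lborel borel uminus = (lborel :: 'a::euclidean_space measure)"
  using lborel_affine[of "-1" "0 :: 'a"] by (simp add: density_1)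

lemma nn_integral_lborel_translate:
  fixes f :: "'a::euclidean_space \<Rightarrow> ennreal"
  assumes [measurable]: "f \<in> borel_measurable borel"
  shows "(\<integral>\<^sup>+y. f (y + c) \<partial>lborel) = (\<integral>\<^sup>+y. f y \<partial>lborel)"
  by (subst lborel_distr_plus[symmetric, of c]) (simp add: nn_integral_distr add.commute)

lemma integral_lborel_translate:
  fixes f :: "'a::euclidean_space \<Rightarrow> 'b::{banach, second_countable_topology}"
  assumes [measurable]: "f \<in> borel_measurable borel"
  shows "(\<integral>y. f (y + c) \<partial>lborel) = (\<integral>y. f y \<partial>lborel)"
  by (subst lborel_distr_plus[symmetric, of c]) (simp add: integral_distr add.commute)

lemma integral_lborel_reflect:
  fixes f :: "'a::euclidean_space \<Rightarrow> 'b::{banach, second_countable_topology}"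
  assumes [measurable]: "f \<in> borel_measurable borel"
  shows "(\<integral>y. f (- y) \<partial>lborel) = (\<integral>y. f y \<partial>lborel)"
  by (subst distr_lborel_uminus[symmetric]) (simp add: integral_distr)

definition heat_kernel :: "real \<Rightarrow> 'a::euclidean_space \<Rightarrow> real" where
  "heat_kernel t x = (4 * pi * t) powr (- real DIM('a) / 2) * exp (- (norm x ^ 2) / (4 * t))"

lemma heat_kernel_nonneg: "heat_kernel t x \<ge> 0"
  by (simp add: heat_kernel_def)

lemma heat_kernel_uminus: "heat_kernel t (- x) = heat_kernel t x"
  by (simp add: heat_kernel_def)

lemma borel_measurable_heat_kernel[measurable (raw)]:
  assumes [measurable]: "f \<in> borel_measurable M" "g \<in> borel_measurable M"
  shows "(\<lambda>x. heat_kernel (f x) (g x :: 'a::euclidean_space)) \<in> borel_measurable M"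
  unfolding heat_kernel_def by measurable

lemma heat_kernel_eq_prod_normal_density:
  fixes x :: "'a::euclidean_space"
  assumes t: "t > 0"
  shows "heat_kernel t x = (\<Prod>b\<in>Basis. normal_density 0 (sqrt (2 * t)) (x \<bullet> b))"
proof -
  have density: "normal_density 0 (sqrt (2 * t)) v = (4 * pi * t) powr (-1/2) * exp (- (v^2) / (4 * t))" for v
    using t by (simp add: normal_density_def powr_minus powr_half_sqrt field_simps)
  have "norm x ^ 2 = (\<Sum>b\<in>Basis. (x \<bullet> b)^2)"
    unfolding power2_norm_eq_inner by (subst euclidean_inner) (simp add: power2_eq_square)
  then have exponent: "(\<Sum>b\<in>Basis. - ((x \<bullet> b)^2) / (4 * t)) = - (norm x ^ 2) / (4 * t)"
    by (simp add: sum_negf sum_divide_distrib)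
  have "(\<Prod>b\<in>Basis. normal_density 0 (sqrt (2 * t)) (x \<bullet> b))
      = ((4 * pi * t) powr (-1/2)) ^ DIM('a) * exp (\<Sum>b\<in>Basis. - ((x \<bullet> b)^2) / (4 * t))"
    by (simp add: density prod.distrib exp_sum)
  also have "((4 * pi * t) powr (-1/2)) ^ DIM('a) = (4 * pi * t) powr (- real DIM('a) / 2)"
    using t by (simp add: powr_realpow[symmetric] powr_powr)
  finally show ?thesis
    unfolding exponent by (simp add: heat_kernel_def)
qed

lemma nn_integral_heat_kernel:
  assumes "t > 0"
  shows "(\<integral>\<^sup>+x. ennreal (heat_kernel t (x::'a::euclidean_space)) \<partial>lborel) = 1"
proof -
  have "(\<integral>\<^sup>+x. ennreal (heat_kernel t (x::'a)) \<partial>lborel)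
      = (\<integral>\<^sup>+x. (\<Prod>b\<in>Basis. ennreal (normal_density 0 (sqrt (2 * t)) ((x::'a) \<bullet> b))) \<partial>lborel)"
    using assms by (simp add: heat_kernel_eq_prod_normal_density prod_ennreal)
  also have "\<dots> = (\<Prod>b\<in>(Basis::'a set). \<integral>\<^sup>+v. ennreal (normal_density 0 (sqrt (2 * t)) v) \<partial>lborel)"
    by (rule nn_integral_lborel_prod) auto
  also have "\<dots> = 1"
    using assms by (subst nn_integral_eq_integral) auto
  finally show ?thesis .
qed

lemma integrable_heat_kernel:
  "t > 0 \<Longrightarrow> integrable lborel (heat_kernel t :: 'a::euclidean_space \<Rightarrow> real)"
  by (subst integrable_iff_bounded) (auto simp: heat_kernel_nonneg nn_integral_heat_kernel)

lemma integral_heat_kernel: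
  "t > 0 \<Longrightarrow> (\<integral>x. heat_kernel t (x::'a::euclidean_space) \<partial>lborel) = 1"
  by (subst integral_eq_nn_integral) (auto simp: heat_kernel_nonneg nn_integral_heat_kernel)

lemma heat_kernel_mult_heat_kernel:
  fixes x y :: "'a::euclidean_space"
  assumes t: "t > 0" and s: "s > 0"
  shows "heat_kernel t y * heat_kernel s (x - y)
       = heat_kernel (t + s) x * heat_kernel (t * s / (t + s)) (y - (t / (t + s)) *\<^sub>R x)"
proof -
  define p where "p = - real DIM('a) / 2"
  define d where "d = t + s"
  have d: "d > 0" using t s by (simp add: d_def)
  have "(4 * pi * t) powr p * (4 * pi * s) powr p = ((4 * pi * t) * (4 * pi * s)) powr p"
    using t s by (subst powr_mult) auto
  also have "(4 * pi * t) * (4 * pi * s) = (4 * pi * d) * (4 * pi * (t * s / d))"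
    using d by (simp add: field_simps)
  also have "(\<dots>) powr p = (4 * pi * d) powr p * (4 * pi * (t * s / d)) powr p"
    using t s d by (subst powr_mult) auto
  finally have prefactor: "(4 * pi * t) powr p * (4 * pi * s) powr p
      = (4 * pi * d) powr p * (4 * pi * (t * s / d)) powr p" .
  have square: "- b / (4 * t) + - (a - 2 * c + b) / (4 * s)
      = - a / (4 * d) + - (b - 2 * (t / d) * c + (t / d)^2 * a) / (4 * (t * s / d))" for a b c
    using t s d by (simp add: field_simps power2_eq_square) (simp add: d_def algebra_simps)
  have "norm (x - y) ^ 2 = norm x ^ 2 - 2 * (x \<bullet> y) + norm y ^ 2"
    by (simp add: power2_norm_eq_inner inner_diff_left inner_diff_right inner_commute)
  moreover have "norm (y - (t / d) *\<^sub>R x) ^ 2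
      = norm y ^ 2 - 2 * (t / d) * (x \<bullet> y) + (t / d)^2 * norm x ^ 2"
    by (simp only: power2_norm_eq_inner)
      (simp add: inner_diff_left inner_diff_right inner_commute power2_eq_square algebra_simps)
  ultimately have exponent: "- (norm y ^ 2) / (4 * t) + - (norm (x - y) ^ 2) / (4 * s)
      = - (norm x ^ 2) / (4 * d) + - (norm (y - (t / d) *\<^sub>R x) ^ 2) / (4 * (t * s / d))"
    by (simp only: square)
  have "heat_kernel t y * heat_kernel s (x - y)
      = ((4 * pi * t) powr p * (4 * pi * s) powr p)
        * (exp (- (norm y ^ 2) / (4 * t)) * exp (- (norm (x - y) ^ 2) / (4 * s)))"
    by (simp add: heat_kernel_def p_def mult_ac)
  also have "\<dots> = ((4 * pi * d) powr p * (4 * pi * (t * s / d)) powr p)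
        * (exp (- (norm x ^ 2) / (4 * d)) * exp (- (norm (y - (t / d) *\<^sub>R x) ^ 2) / (4 * (t * s / d))))"
    by (simp only: prefactor mult_exp_exp exponent)
  also have "\<dots> = heat_kernel d x * heat_kernel (t * s / d) (y - (t / d) *\<^sub>R x)"
    by (simp add: heat_kernel_def p_def mult_ac)
  finally show ?thesis by (simp add: d_def)
qed

lemma nn_integral_heat_kernel_conv:
  fixes x :: "'a::euclidean_space"
  assumes t: "t > 0" and s: "s > 0"
  shows "(\<integral>\<^sup>+y. ennreal (heat_kernel t y * heat_kernel s (x - y)) \<partial>lborel) = ennreal (heat_kernel (t + s) x)"
proof -
  define r where "r = t * s / (t + s)"
  have r: "r > 0" using t s by (simp add: r_def)
  have "(\<integral>\<^sup>+y. ennreal (heat_kernel r (y - (t / (t + s)) *\<^sub>R x)) \<partial>lborel)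
      = (\<integral>\<^sup>+y. ennreal (heat_kernel r (y::'a)) \<partial>lborel)"
    using nn_integral_lborel_translate[of "\<lambda>y. ennreal (heat_kernel r y)" "- (t / (t + s)) *\<^sub>R x"]
    by simp
  then have "(\<integral>\<^sup>+y. ennreal (heat_kernel (t + s) x) * ennreal (heat_kernel r (y - (t / (t + s)) *\<^sub>R x)) \<partial>lborel)
      = ennreal (heat_kernel (t + s) x)"
    using r by (simp add: nn_integral_cmult nn_integral_heat_kernel)
  then show ?thesis
    using t s by (simp add: heat_kernel_mult_heat_kernel ennreal_mult heat_kernel_nonneg r_def)
qed

lemma mult_exp_neg_square_le:
  fixes u t :: real
  assumes t: "t > 0" and u: "u \<ge> 0"
  shows "u * exp (- (u^2) / (4 * t)) \<le> 2 * sqrt t * exp (- (u^2) / (8 * t))"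
proof -
  define r where "r = sqrt t"
  have r: "r > 0" "t = r^2" using t by (auto simp: r_def)
  have "0 \<le> (u - 2 * r)^2 / (4 * r)" using r by simp
  moreover have "(u - 2 * r)^2 / (4 * r) + r = 2 * r * (1 + u^2 / (8 * t)) - u"
    using r by (simp add: field_simps power2_eq_square)
  ultimately have "u \<le> 2 * r * (1 + u^2 / (8 * t))" using r by linarith
  also have "\<dots> \<le> 2 * r * exp (u^2 / (8 * t))"
    using r by (intro mult_left_mono) (auto simp: exp_ge_add_one_self)
  finally have "u * exp (- (u^2) / (4 * t)) \<le> 2 * r * exp (u^2 / (8 * t)) * exp (- (u^2) / (4 * t))"
    by (rule mult_right_mono) simp
  also have "\<dots> = 2 * r * exp (- (u^2) / (8 * t))"
    unfolding mult.assoc mult_exp_exp using t by (simp add: field_simps)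
  finally show ?thesis by (simp add: r_def)
qed

lemma integrable_heat_kernel_moment:
  assumes t: "t > 0"
  shows "integrable lborel (\<lambda>z::'a::euclidean_space. heat_kernel t z *\<^sub>R z)"
proof (rule Bochner_Integration.integrable_bound)
  define C where "C = 2 * sqrt t * 2 powr (real DIM('a) / 2)"
  show "integrable lborel (\<lambda>z::'a. C * heat_kernel (2 * t) z)"
    using integrable_heat_kernel[of "2 * t"] t by auto
  have "(4 * pi * (2 * t)) powr (- real DIM('a) / 2)
      = 2 powr (- real DIM('a) / 2) * (4 * pi * t) powr (- real DIM('a) / 2)"
    using t by (subst powr_mult[symmetric]) (auto simp: mult_ac)
  then have prefactor: "(4 * pi * t) powr (- real DIM('a) / 2)
      = 2 powr (real DIM('a) / 2) * (4 * pi * (2 * t)) powr (- real DIM('a) / 2)"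
    by (simp add: powr_minus)
  have bound: "norm (heat_kernel t z *\<^sub>R z) \<le> norm (C * heat_kernel (2 * t) z)" for z :: 'a
  proof -
    have "norm (heat_kernel t z *\<^sub>R z)
        = (4 * pi * t) powr (- real DIM('a) / 2) * (norm z * exp (- (norm z ^ 2) / (4 * t)))"
      by (simp add: heat_kernel_def abs_mult mult_ac)
    also have "\<dots> \<le> (4 * pi * t) powr (- real DIM('a) / 2) * (2 * sqrt t * exp (- (norm z ^ 2) / (8 * t)))"
      using t by (intro mult_left_mono mult_exp_neg_square_le) auto
    also have "\<dots> = C * heat_kernel (2 * t) z"
      unfolding prefactor by (simp add: C_def heat_kernel_def mult_ac)
    also have "\<dots> \<le> norm (C * heat_kernel (2 * t) z)"
      by simp
    finally show ?thesis .
  qed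
  show "AE z in lborel. norm (heat_kernel t z *\<^sub>R z) \<le> norm (C * heat_kernel (2 * t) (z::'a))"
    by (intro AE_I2 bound)
qed measurable

lemma integral_heat_kernel_moment:
  "(\<integral>z. heat_kernel t z *\<^sub>R z \<partial>lborel) = (0::'a::euclidean_space)"
proof -
  have "(\<integral>z. heat_kernel t z *\<^sub>R (z::'a) \<partial>lborel) = (\<integral>z. heat_kernel t (- z) *\<^sub>R (- z) \<partial>lborel)"
    by (rule integral_lborel_reflect[symmetric]) measurable
  also have "\<dots> = - (\<integral>z. heat_kernel t z *\<^sub>R z \<partial>lborel)"
    by (simp add: heat_kernel_uminus)
  finally have "(2::real) *\<^sub>R (\<integral>z. heat_kernel t z *\<^sub>R (z::'a) \<partial>lborel) = 0"
    by (simp add: scaleR_2 eq_neg_iff_add_eq_0)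
  then show ?thesis by simp
qed

lemma integral_heat_kernel_conv_moment:
  fixes x :: "'a::euclidean_space"
  assumes t: "t > 0" and s: "s > 0"
  shows "(\<integral>y. (heat_kernel t y * heat_kernel s (x - y)) *\<^sub>R (x - y) \<partial>lborel)
       = (s / (t + s) * heat_kernel (t + s) x) *\<^sub>R x"
proof -
  define r where "r = t * s / (t + s)"
  define \<mu> where "\<mu> = (t / (t + s)) *\<^sub>R x"
  have r: "r > 0" using t s by (simp add: r_def)
  have moment_split: "(\<integral>z. heat_kernel r z *\<^sub>R (w - z) \<partial>lborel)
      = (\<integral>z. heat_kernel r (z::'a) \<partial>lborel) *\<^sub>R w - (\<integral>z. heat_kernel r z *\<^sub>R (z::'a) \<partial>lborel)" for w :: 'a
    using integrable_heat_kernel[OF r, where 'a = 'a] integrable_heat_kernel_moment[OF r, where 'a = 'a]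
    by (simp add: scaleR_diff_right)
  have "(\<integral>y. (heat_kernel t y * heat_kernel s (x - y)) *\<^sub>R (x - y) \<partial>lborel)
      = (\<integral>y. heat_kernel (t + s) x *\<^sub>R (heat_kernel r (y + - \<mu>) *\<^sub>R ((x - \<mu>) - (y + - \<mu>))) \<partial>lborel)"
    by (intro Bochner_Integration.integral_cong)
      (simp_all add: heat_kernel_mult_heat_kernel[OF t s] r_def \<mu>_def)
  also have "\<dots> = heat_kernel (t + s) x *\<^sub>R (\<integral>y. heat_kernel r (y + - \<mu>) *\<^sub>R ((x - \<mu>) - (y + - \<mu>)) \<partial>lborel)"
    by (rule integral_scaleR_right)
  also have "(\<integral>y. heat_kernel r (y + - \<mu>) *\<^sub>R ((x - \<mu>) - (y + - \<mu>)) \<partial>lborel)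
      = (\<integral>z. heat_kernel r z *\<^sub>R ((x - \<mu>) - z) \<partial>lborel)"
    by (rule integral_lborel_translate[where f = "\<lambda>z. heat_kernel r z *\<^sub>R ((x - \<mu>) - z)"]) measurable
  also have "\<dots> = (\<integral>z. heat_kernel r (z::'a) \<partial>lborel) *\<^sub>R (x - \<mu>) - (\<integral>z. heat_kernel r z *\<^sub>R z \<partial>lborel)"
    by (rule moment_split)
  also have "\<dots> = x - \<mu>"
    using r by (simp add: integral_heat_kernel integral_heat_kernel_moment)
  also have "x - \<mu> = (1 - t / (t + s)) *\<^sub>R x"
    by (simp add: \<mu>_def scaleR_diff_left)
  also have "1 - t / (t + s) = s / (t + s)"
    using t s by (simp add: field_simps)
  finally show ?thesis by simp
qed

section \<open>Gamma and Beta integrals on the half-line\<close>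

lemma has_integral_powr_exp_inverse:
  fixes c k :: real
  assumes c: "c > 0" and k: "k > 0"
  shows "((\<lambda>t. t powr (- c - 1) * exp (- k / t)) has_integral (Gamma c * k powr (- c))) {0<..}"
proof -
  define f where "f = (\<lambda>v::real. v powr (c - 1) / exp v)"
  define g where "g = (\<lambda>t::real. k / t)"
  define g' where "g' = (\<lambda>t::real. - k / t^2)"
  have "(f has_integral Gamma c) {0..}"
    unfolding f_def by (rule Gamma_integral_real[OF c])
  moreover have "negligible {x \<in> {0..} - {0<..}. f x \<noteq> 0}"
    by (rule negligible_subset[of "{0}"]) auto
  moreover have "negligible {x \<in> {0<..} - {0..}. f x \<noteq> 0}"
    by (rule negligible_subset[of "{}"]) auto
  ultimately have Gamma: "(f has_integral Gamma c) {0<..}"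
    by (subst (asm) has_integral_spike_set_eq[where T = "{0<..}"]) auto
  have img: "g ` {0<..} = {0<..}"
  proof
    show "{0<..} \<subseteq> g ` {0<..}"
    proof
      fix v :: real assume "v \<in> {0<..}"
      then have "v = g (k / v)" "k / v \<in> {0<..}" using k by (auto simp: g_def)
      then show "v \<in> g ` {0<..}" by blast
    qed
  qed (use k in \<open>auto simp: g_def\<close>)
  have der: "(g has_field_derivative g' t) (at t within {0<..})" if "t \<in> {0<..}" for t
    using that unfolding g_def g'_def
    by (auto intro!: derivative_eq_intros simp: power2_eq_square field_simps)
  have inj: "inj_on g {0<..}" using k by (auto simp: inj_on_def g_def field_simps)
  have "f absolutely_integrable_on {0<..}"
    using Gamma by (intro nonnegative_absolutely_integrable_1) (auto simp: f_def)
  then have "(\<lambda>x. \<bar>g' x\<bar> * f (g x)) absolutely_integrable_on {0<..}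
      \<and> integral {0<..} (\<lambda>x. \<bar>g' x\<bar> * f (g x)) = Gamma c"
    using has_absolute_integral_change_of_variables_1'[of "{0<..}" g g' f "Gamma c"] der inj img Gamma
    by (auto simp: integral_unique)
  then have substituted: "((\<lambda>x. \<bar>g' x\<bar> * f (g x)) has_integral Gamma c) {0<..}"
    by (metis absolutely_integrable_on_def has_integral_integral)
  have integrand: "\<bar>g' t\<bar> * f (g t) = k powr c * (t powr (- c - 1) * exp (- k / t))" if "t \<in> {0<..}" for t
  proof -
    have t: "t > 0" using that by simp
    have "\<bar>g' t\<bar> * f (g t) = (k / t^2) * ((k powr (c - 1) / t powr (c - 1)) / exp (k / t))"
      using t k by (simp add: g'_def f_def g_def powr_divide)
    also have "\<dots> = k powr c * (t powr (- c - 1) * exp (- k / t))"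
      using t k by (simp add: powr_diff powr_minus exp_minus field_simps power2_eq_square powr_add)
    finally show ?thesis .
  qed
  have "((\<lambda>t. k powr c * (t powr (- c - 1) * exp (- k / t))) has_integral Gamma c) {0<..}"
    by (rule has_integral_eq[OF integrand substituted])
  then have "((\<lambda>t. k powr (- c) * (k powr c * (t powr (- c - 1) * exp (- k / t))))
      has_integral k powr (- c) * Gamma c) {0<..}"
    by (rule has_integral_mult_right)
  moreover have "k powr (- c) * (k powr c * X) = X" for X
    using k by (simp add: powr_minus)
  ultimately show ?thesis by (simp add: mult.commute)
qed

lemma nn_integral_Beta_dilated:
  fixes a b \<tau> :: real
  assumes a: "a > 0" and b: "b > 0"
  shows "(\<integral>\<^sup>+t. ennreal (indicator {0<..} t * indicator {0<..} (\<tau> - t) * (t powr (a - 1) * (\<tau> - t) powr (b - 1))) \<partial>lborel)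
       = ennreal (indicator {0<..} \<tau> * \<tau> powr (a + b - 1) * Beta a b)"
proof (cases "\<tau> > 0")
  case False
  then have "(\<lambda>t. ennreal (indicator {0<..} t * indicator {0<..} (\<tau> - t)
      * (t powr (a - 1) * (\<tau> - t) powr (b - 1)))) = (\<lambda>_. 0)"
    by (auto simp: indicator_def)
  with False show ?thesis by (simp only:) (simp add: indicator_def)
next
  case True
  have "(\<integral>\<^sup>+t. ennreal (indicator {0<..} t * indicator {0<..} (\<tau> - t) * (t powr (a - 1) * (\<tau> - t) powr (b - 1))) \<partial>lborel)
      = ennreal \<tau> * (\<integral>\<^sup>+u. ennreal (indicator {0<..} (0 + \<tau> * u) * indicator {0<..} (\<tau> - (0 + \<tau> * u))
          * ((0 + \<tau> * u) powr (a - 1) * (\<tau> - (0 + \<tau> * u)) powr (b - 1))) \<partial>lborel)"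
    using True by (subst nn_integral_real_affine[where c = \<tau> and t = 0]) auto
  also have "\<dots> = ennreal \<tau> * (\<integral>\<^sup>+u. ennreal (\<tau> powr (a + b - 2))
      * ennreal (indicator {0<..<1} u * (u powr (a - 1) * (1 - u) powr (b - 1))) \<partial>lborel)"
  proof (intro arg_cong2[where f = "(*)"] refl nn_integral_cong)
    fix u :: real
    show "ennreal (indicator {0<..} (0 + \<tau> * u) * indicator {0<..} (\<tau> - (0 + \<tau> * u))
          * ((0 + \<tau> * u) powr (a - 1) * (\<tau> - (0 + \<tau> * u)) powr (b - 1)))
        = ennreal (\<tau> powr (a + b - 2)) * ennreal (indicator {0<..<1} u * (u powr (a - 1) * (1 - u) powr (b - 1)))"
    proof (cases "0 < u \<and> u < 1")
      case True
      have "\<tau> - \<tau> * u = \<tau> * (1 - u)" by (simp add: algebra_simps)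
      moreover have "\<tau> powr (a + b - 2) = \<tau> powr (a - 1) * \<tau> powr (b - 1)"
        by (simp add: powr_add[symmetric])
      ultimately show ?thesis using True \<open>\<tau> > 0\<close>
        by (simp add: indicator_def powr_mult ennreal_mult[symmetric] mult_ac)
    next
      case False
      then have "\<not> (0 < \<tau> * u \<and> \<tau> * u < \<tau>)" using \<open>\<tau> > 0\<close>
        by (auto simp: zero_less_mult_iff)
      then show ?thesis using False by (auto simp: indicator_def)
    qed
  qed
  also have "\<dots> = ennreal \<tau> * (ennreal (\<tau> powr (a + b - 2)) * ennreal (Beta a b))"
  proof -
    have "((\<lambda>u. u powr (a - 1) * (1 - u) powr (b - 1)) has_integral Beta a b) {0<..<1}"
      using has_integral_Beta_real[OF a b] by (simp add: has_integral_Icc_iff_Ioo)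
    from nn_integral_has_integral_lebesgue[OF _ this] show ?thesis
      by (subst nn_integral_cmult) auto
  qed
  also have "\<dots> = ennreal (\<tau> * \<tau> powr (a + b - 2) * Beta a b)"
    using True a b by (simp add: ennreal_mult[symmetric] Beta_def Gamma_real_pos mult.assoc)
  also have "\<tau> * \<tau> powr (a + b - 2) = \<tau> powr (a + b - 1)"
    using True by (simp add: powr_add[symmetric] powr_mult_base)
  finally show ?thesis using True by simp
qed

lemma nn_integral_powr_conv_Beta:
  fixes f :: "real \<Rightarrow> ennreal"
  assumes a: "a > 0" and b: "b > 0" and [measurable]: "f \<in> borel_measurable borel"
  shows "(\<integral>\<^sup>+t. (\<integral>\<^sup>+s. ennreal (indicator {0<..} t * indicator {0<..} s * (t powr (a - 1) * s powr (b - 1)))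
            * f (t + s) \<partial>lborel) \<partial>lborel)
       = ennreal (Beta a b) * (\<integral>\<^sup>+\<tau>. ennreal (indicator {0<..} \<tau> * \<tau> powr (a + b - 1)) * f \<tau> \<partial>lborel)"
proof -
  define F where "F t \<tau> = ennreal (indicator {0<..} t * indicator {0<..} (\<tau> - t)
      * (t powr (a - 1) * (\<tau> - t) powr (b - 1))) * f \<tau>" for t \<tau>
  have [measurable]: "(\<lambda>(t, \<tau>). F t \<tau>) \<in> borel_measurable (lborel \<Otimes>\<^sub>M lborel)"
    unfolding F_def by measurable
  have "(\<integral>\<^sup>+s. ennreal (indicator {0<..} t * indicator {0<..} s * (t powr (a - 1) * s powr (b - 1)))
      * f (t + s) \<partial>lborel) = (\<integral>\<^sup>+\<tau>. F t \<tau> \<partial>lborel)" for t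
    using nn_integral_real_affine[of "F t" 1 t] by (simp add: F_def)
  then have "(\<integral>\<^sup>+t. (\<integral>\<^sup>+s. ennreal (indicator {0<..} t * indicator {0<..} s * (t powr (a - 1) * s powr (b - 1)))
      * f (t + s) \<partial>lborel) \<partial>lborel) = (\<integral>\<^sup>+t. (\<integral>\<^sup>+\<tau>. F t \<tau> \<partial>lborel) \<partial>lborel)"
    by simp
  also have "\<dots> = (\<integral>\<^sup>+\<tau>. (\<integral>\<^sup>+t. F t \<tau> \<partial>lborel) \<partial>lborel)"
    by (rule lborel_pair.Fubini'[symmetric]) measurable
  also have "\<dots> = (\<integral>\<^sup>+\<tau>. ennreal (Beta a b) * (ennreal (indicator {0<..} \<tau> * \<tau> powr (a + b - 1)) * f \<tau>) \<partial>lborel)"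
  proof (rule nn_integral_cong)
    fix \<tau> :: real
    have "(\<integral>\<^sup>+t. F t \<tau> \<partial>lborel) = ennreal (indicator {0<..} \<tau> * \<tau> powr (a + b - 1) * Beta a b) * f \<tau>"
      unfolding F_def by (simp add: nn_integral_multc nn_integral_Beta_dilated[OF a b])
    moreover have "Beta a b \<ge> 0" using a b by (simp add: Beta_def Gamma_real_pos less_imp_le)
    ultimately show "(\<integral>\<^sup>+t. F t \<tau> \<partial>lborel) = ennreal (Beta a b) * (ennreal (indicator {0<..} \<tau> * \<tau> powr (a + b - 1)) * f \<tau>)"
      by (simp add: ennreal_mult[symmetric] mult_ac)
  qed
  also have "\<dots> = ennreal (Beta a b) * (\<integral>\<^sup>+\<tau>. ennreal (indicator {0<..} \<tau> * \<tau> powr (a + b - 1)) * f \<tau> \<partial>lborel)"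
    by (rule nn_integral_cmult) measurable
  finally show ?thesis .
qed

section \<open>Composition of Riesz kernels\<close>

definition weighted_heat_kernel :: "real \<Rightarrow> real \<Rightarrow> 'a::euclidean_space \<Rightarrow> real" where
  "weighted_heat_kernel a t x = indicator {0<..} t * t powr (a - 1) * heat_kernel t x"

definition riesz_kernel :: "real \<Rightarrow> 'a::euclidean_space \<Rightarrow> ennreal" where
  "riesz_kernel a x = (\<integral>\<^sup>+t. ennreal (weighted_heat_kernel a t x) \<partial>lborel)"

definition riesz_const :: "real \<Rightarrow> real \<Rightarrow> real" where
  "riesz_const n a = pi powr (- n / 2) * 4 powr (- a) * Gamma (n / 2 - a)"

lemma weighted_heat_kernel_nonneg: "weighted_heat_kernel a t x \<ge> 0"
  by (simp add: weighted_heat_kernel_def heat_kernel_nonneg)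

lemma borel_measurable_weighted_heat_kernel[measurable (raw)]:
  assumes [measurable]: "f \<in> borel_measurable M" "g \<in> borel_measurable M"
  shows "(\<lambda>x. weighted_heat_kernel a (f x) (g x :: 'a::euclidean_space)) \<in> borel_measurable M"
  unfolding weighted_heat_kernel_def by measurable

lemma riesz_const_pos: "a < n / 2 \<Longrightarrow> riesz_const n a > 0"
  by (simp add: riesz_const_def Gamma_real_pos)

lemma riesz_kernel_eq:
  fixes x :: "'a::euclidean_space"
  defines "n \<equiv> real DIM('a)"
  assumes x: "x \<noteq> 0" and a: "a < n / 2"
  shows "riesz_kernel a x = ennreal (riesz_const n a * norm x powr (2 * a - n))"
proof -
  define c where "c = n / 2 - a"
  define k where "k = norm x ^ 2 / 4"
  have c: "c > 0" using a by (simp add: c_def)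
  have k: "k > 0" using x by (simp add: k_def)
  have integrand: "weighted_heat_kernel a t x
      = (4 * pi) powr (- n / 2) * (indicator {0<..} t * (t powr (- c - 1) * exp (- k / t)))" for t
  proof (cases "t > 0")
    case True
    have "t powr (a - 1) * (4 * pi * t) powr (- n / 2) = (4 * pi) powr (- n / 2) * t powr (- c - 1)"
      using True by (simp add: powr_mult c_def powr_add[symmetric] algebra_simps)
    moreover have "exp (- (norm x ^ 2) / (4 * t)) = exp (- k / t)"
      by (simp add: k_def field_simps)
    ultimately show ?thesis
      using True by (simp add: weighted_heat_kernel_def heat_kernel_def n_def mult_ac)
  qed (simp add: weighted_heat_kernel_def)
  have "k powr (- c) = (norm x powr 2 / 4) powr (- c)"
    using x by (simp add: k_def powr_realpow)
  also have "\<dots> = (norm x powr 2) powr (- c) / 4 powr (- c)"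
    by (simp add: powr_divide)
  also have "\<dots> = (norm x powr 2) powr (- c) * 4 powr c"
    by (simp add: powr_minus divide_inverse)
  also have "(norm x powr 2) powr (- c) = norm x powr (2 * a - n)"
    by (simp only: powr_powr) (simp add: c_def algebra_simps)
  finally have "(4 * pi) powr (- n / 2) * (Gamma c * k powr (- c)) = riesz_const n a * norm x powr (2 * a - n)"
    by (simp add: riesz_const_def c_def powr_mult powr_add[symmetric] mult_ac)
  moreover have "riesz_kernel a x = ennreal ((4 * pi) powr (- n / 2))
      * (\<integral>\<^sup>+t. ennreal (indicator {0<..} t * (t powr (- c - 1) * exp (- k / t))) \<partial>lborel)"
    unfolding riesz_kernel_def integrand by (simp add: ennreal_mult nn_integral_cmult)
  moreover have "(\<integral>\<^sup>+t. ennreal (indicator {0<..} t * (t powr (- c - 1) * exp (- k / t))) \<partial>lborel)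
      = ennreal (Gamma c * k powr (- c))"
    by (rule nn_integral_has_integral_lebesgue[OF _ has_integral_powr_exp_inverse[OF c k]]) auto
  ultimately show ?thesis
    using c by (simp add: ennreal_mult[symmetric] Gamma_real_pos)
qed

lemma riesz_kernel_mult:
  "riesz_kernel a y * riesz_kernel b z
     = (\<integral>\<^sup>+t. (\<integral>\<^sup>+s. ennreal (weighted_heat_kernel a t y) * ennreal (weighted_heat_kernel b s z) \<partial>lborel) \<partial>lborel)"
proof -
  have "riesz_kernel a y * riesz_kernel b z
      = (\<integral>\<^sup>+t. ennreal (weighted_heat_kernel a t y) * riesz_kernel b z \<partial>lborel)"
    unfolding riesz_kernel_def by (rule nn_integral_multc[symmetric]) measurable
  then show ?thesis
    unfolding riesz_kernel_def by (simp add: nn_integral_cmult[symmetric])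
qed

lemma nn_integral_weighted_heat_kernel_conv:
  fixes x :: "'a::euclidean_space"
  shows "(\<integral>\<^sup>+y. ennreal (weighted_heat_kernel a t y) * ennreal (weighted_heat_kernel b s (x - y)) \<partial>lborel)
       = ennreal (indicator {0<..} t * indicator {0<..} s * (t powr (a - 1) * s powr (b - 1))) * ennreal (heat_kernel (t + s) x)"
proof (cases "t > 0 \<and> s > 0")
  case True
  then have "(\<integral>\<^sup>+y. ennreal (weighted_heat_kernel a t y) * ennreal (weighted_heat_kernel b s (x - y)) \<partial>lborel)
      = (\<integral>\<^sup>+y. ennreal (t powr (a - 1) * s powr (b - 1)) * ennreal (heat_kernel t y * heat_kernel s (x - y)) \<partial>lborel)"
    by (intro nn_integral_cong) (simp add: weighted_heat_kernel_def ennreal_mult[symmetric] heat_kernel_nonneg mult_ac)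
  with True show ?thesis
    by (simp add: nn_integral_cmult nn_integral_heat_kernel_conv)
qed (auto simp: weighted_heat_kernel_def)

lemma nn_integral_riesz_kernel_conv:
  fixes x :: "'a::euclidean_space"
  assumes a: "a > 0" and b: "b > 0"
  shows "(\<integral>\<^sup>+y. riesz_kernel a y * riesz_kernel b (x - y) \<partial>lborel) = ennreal (Beta a b) * riesz_kernel (a + b) x"
proof -
  have "(\<integral>\<^sup>+y. riesz_kernel a y * riesz_kernel b (x - y) \<partial>lborel)
      = (\<integral>\<^sup>+t. (\<integral>\<^sup>+s. (\<integral>\<^sup>+y. ennreal (weighted_heat_kernel a t y)
          * ennreal (weighted_heat_kernel b s (x - y)) \<partial>lborel) \<partial>lborel) \<partial>lborel)"
    unfolding riesz_kernel_mult
    by (subst lborel_pair.Fubini', measurable, intro nn_integral_cong lborel_pair.Fubini', measurable)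
  also have "\<dots> = (\<integral>\<^sup>+t. (\<integral>\<^sup>+s. ennreal (indicator {0<..} t * indicator {0<..} s * (t powr (a - 1) * s powr (b - 1)))
      * ennreal (heat_kernel (t + s) x) \<partial>lborel) \<partial>lborel)"
    by (simp only: nn_integral_weighted_heat_kernel_conv)
  also have "\<dots> = ennreal (Beta a b) * riesz_kernel (a + b) x"
    unfolding riesz_kernel_def weighted_heat_kernel_def
    by (subst nn_integral_powr_conv_Beta[OF a b])
      (simp_all add: ennreal_mult[symmetric] heat_kernel_nonneg)
  finally show ?thesis .
qed

lemma nn_integral_riesz_conv:
  fixes x :: "'a::euclidean_space"
  defines "n \<equiv> real DIM('a)"
  assumes x: "x \<noteq> 0" and a: "a > 0" and b: "b > 0" and ab: "a + b < n / 2"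
  shows "(\<integral>\<^sup>+y. ennreal (norm y powr (2 * a - n) * norm (x - y) powr (2 * b - n)) \<partial>lborel)
       = ennreal (Beta a b * riesz_const n (a + b) / (riesz_const n a * riesz_const n b) * norm x powr (2 * (a + b) - n))"
    (is "?I = _")
proof -
  have an: "a < n / 2" and bn: "b < n / 2" using a b ab by auto
  define C where "C = riesz_const n a * riesz_const n b"
  have C: "C > 0" using an bn by (simp add: C_def riesz_const_pos)
  have "(\<integral>\<^sup>+y. riesz_kernel a y * riesz_kernel b (x - y) \<partial>lborel)
      = (\<integral>\<^sup>+y. ennreal C * ennreal (norm y powr (2 * a - n) * norm (x - y) powr (2 * b - n)) \<partial>lborel)"
  proof (rule nn_integral_cong_AE)
    show "AE y in lborel. riesz_kernel a y * riesz_kernel b (x - y)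
        = ennreal C * ennreal (norm y powr (2 * a - n) * norm (x - y) powr (2 * b - n))"
      using AE_lborel_singleton[of 0] AE_lborel_singleton[of x]
    proof eventually_elim
      case (elim y)
      then have "x - y \<noteq> 0" by simp
      with elim show ?case
        using an bn riesz_const_pos[OF an] riesz_const_pos[OF bn]
        by (simp add: riesz_kernel_eq n_def[symmetric] C_def ennreal_mult[symmetric] mult_ac)
    qed
  qed
  also have "\<dots> = ennreal C * (\<integral>\<^sup>+y. ennreal (norm y powr (2 * a - n) * norm (x - y) powr (2 * b - n)) \<partial>lborel)"
    by (rule nn_integral_cmult) measurable
  finally have "ennreal C * ?I = ennreal (Beta a b * (riesz_const n (a + b) * norm x powr (2 * (a + b) - n)))"
    using nn_integral_riesz_kernel_conv[OF a b, of x] riesz_kernel_eq[OF x, of "a + b"] ab a b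
    by (simp add: n_def ennreal_mult[symmetric] Beta_def Gamma_real_pos riesz_const_def)
  moreover have "Beta a b * (riesz_const n (a + b) * norm x powr (2 * (a + b) - n)) \<ge> 0"
    using a b ab by (simp add: Beta_def Gamma_real_pos riesz_const_pos less_imp_le)
  moreover have "?I = ennreal (1 / C) * (ennreal C * ?I)"
    using C by (simp add: ennreal_mult[symmetric] mult.assoc[symmetric])
  ultimately show ?thesis
    using C by (simp add: ennreal_mult[symmetric] C_def field_simps)
qed

lemma integral_riesz_conv:
  fixes x :: "'a::euclidean_space"
  defines "n \<equiv> real DIM('a)"
  assumes x: "x \<noteq> 0" and a: "a > 0" and b: "b > 0" and ab: "a + b < n / 2"
  shows "(\<integral>y. norm y powr (2 * a - n) * norm (x - y) powr (2 * b - n) \<partial>lborel)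
       = Beta a b * riesz_const n (a + b) / (riesz_const n a * riesz_const n b) * norm x powr (2 * (a + b) - n)"
proof -
  have "a < n / 2" "b < n / 2" "a + b < n / 2" using a b ab by auto
  then have "Beta a b * riesz_const n (a + b) / (riesz_const n a * riesz_const n b) * norm x powr (2 * (a + b) - n) \<ge> 0"
    using a b by (simp add: Beta_def Gamma_real_pos riesz_const_pos less_imp_le)
  then show ?thesis
    using nn_integral_riesz_conv[OF x a b ab[unfolded n_def]]
    by (subst integral_eq_nn_integral) (auto simp: n_def)
qed

lemma riesz_const_quotient:
  assumes a: "a < n / 2" and b: "b < n / 2"
  shows "riesz_const n (a + b) / (riesz_const n a * riesz_const n b)
       = pi powr (n / 2) * Gamma (n / 2 - a - b) / (Gamma (n / 2 - a) * Gamma (n / 2 - b))"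
proof -
  have "Gamma (n / 2 - a) > 0" "Gamma (n / 2 - b) > 0"
    using a b by (simp_all add: Gamma_real_pos)
  moreover have "pi powr (- n / 2) = 1 / pi powr (n / 2)"
    using powr_minus_divide[of pi "n / 2"] by simp
  moreover have "(4::real) powr (- (a + b)) = 4 powr (- a) * 4 powr (- b)"
    by (simp add: powr_add[symmetric])
  ultimately show ?thesis
    by (simp add: riesz_const_def field_simps diff_diff_eq)
qed

lemma nn_integral_weighted_heat_kernel_pair:
  "(\<integral>\<^sup>+p. ennreal (weighted_heat_kernel a (fst p) y * weighted_heat_kernel b (snd p) z) \<partial>(lborel \<Otimes>\<^sub>M lborel))
     = riesz_kernel a y * riesz_kernel b z"
  by (subst lborel.nn_integral_fst[symmetric], measurable)
    (simp add: riesz_kernel_mult ennreal_mult weighted_heat_kernel_nonneg)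

lemma has_bochner_integral_weighted_heat_kernel_pair:
  fixes y z :: "'a::euclidean_space"
  defines "n \<equiv> real DIM('a)"
  assumes y: "y \<noteq> 0" and z: "z \<noteq> 0" and a: "a < n / 2" and b: "b < n / 2"
  shows "has_bochner_integral (lborel \<Otimes>\<^sub>M lborel)
      (\<lambda>p. weighted_heat_kernel a (fst p) y * weighted_heat_kernel b (snd p) z)
      (riesz_const n a * norm y powr (2 * a - n) * (riesz_const n b * norm z powr (2 * b - n)))"
proof (rule has_bochner_integral_nn_integral)
  show "(\<integral>\<^sup>+p. ennreal (weighted_heat_kernel a (fst p) y * weighted_heat_kernel b (snd p) z) \<partial>(lborel \<Otimes>\<^sub>M lborel))
      = ennreal (riesz_const n a * norm y powr (2 * a - n) * (riesz_const n b * norm z powr (2 * b - n)))"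
    using riesz_const_pos[OF a] riesz_const_pos[OF b]
      riesz_kernel_eq[OF y a[unfolded n_def]] riesz_kernel_eq[OF z b[unfolded n_def]]
    by (simp add: nn_integral_weighted_heat_kernel_pair n_def ennreal_mult[symmetric])
qed (use riesz_const_pos[OF a] riesz_const_pos[OF b] in \<open>auto simp: weighted_heat_kernel_nonneg\<close>)

lemma integral_weighted_heat_kernel_conv_moment:
  fixes x :: "'a::euclidean_space"
  shows "(\<integral>y. (weighted_heat_kernel a t y * weighted_heat_kernel b s (x - y)) *\<^sub>R (x - y) \<partial>lborel)
       = (indicator {0<..} t * indicator {0<..} s * (t powr (a - 1) * s powr b)
          * (heat_kernel (t + s) x / (t + s))) *\<^sub>R x"
proof (cases "t > 0 \<and> s > 0")
  case True
  then have "s * s powr (b - 1) = s powr b"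
    by (simp add: powr_mult_base)
  then have "(t powr (a - 1) * s powr (b - 1)) * (s / (t + s) * heat_kernel (t + s) x)
      = t powr (a - 1) * s powr b * (heat_kernel (t + s) x / (t + s))"
    by (simp add: field_simps)
  moreover have "(\<integral>y. (weighted_heat_kernel a t y * weighted_heat_kernel b s (x - y)) *\<^sub>R (x - y) \<partial>lborel)
      = (t powr (a - 1) * s powr (b - 1)) *\<^sub>R (\<integral>y. (heat_kernel t y * heat_kernel s (x - y)) *\<^sub>R (x - y) \<partial>lborel)"
    using True by (simp add: weighted_heat_kernel_def mult_ac flip: integral_scaleR_right)
  ultimately show ?thesis
    using True by (simp add: integral_heat_kernel_conv_moment)
qed (auto simp: weighted_heat_kernel_def)

lemma nn_integral_Beta_heat_kernel:
  fixes x :: "'a::euclidean_space"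
  assumes a: "a > 0" and b: "b \<ge> 0"
  shows "(\<integral>\<^sup>+p. ennreal (indicator {0<..} (fst p) * indicator {0<..} (snd p)
            * (fst p powr (a - 1) * snd p powr b) * (heat_kernel (fst p + snd p) x / (fst p + snd p)))
          \<partial>(lborel \<Otimes>\<^sub>M lborel))
       = ennreal (Beta a (b + 1)) * riesz_kernel (a + b) x"
proof -
  have "ennreal (indicator {0<..} t * indicator {0<..} s * (t powr (a - 1) * s powr b) * (heat_kernel (t + s) x / (t + s)))
      = ennreal (indicator {0<..} t * indicator {0<..} s * (t powr (a - 1) * s powr (b + 1 - 1)))
        * ennreal (heat_kernel (t + s) x / (t + s))" for t s :: real
    by (cases "t > 0 \<and> s > 0") (auto simp: ennreal_mult[symmetric] heat_kernel_nonneg)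
  then have "(\<integral>\<^sup>+p. ennreal (indicator {0<..} (fst p) * indicator {0<..} (snd p)
            * (fst p powr (a - 1) * snd p powr b) * (heat_kernel (fst p + snd p) x / (fst p + snd p)))
          \<partial>(lborel \<Otimes>\<^sub>M lborel))
      = (\<integral>\<^sup>+t. (\<integral>\<^sup>+s. ennreal (indicator {0<..} t * indicator {0<..} s * (t powr (a - 1) * s powr (b + 1 - 1)))
            * ennreal (heat_kernel (t + s) x / (t + s)) \<partial>lborel) \<partial>lborel)"
    by (subst lborel.nn_integral_fst[symmetric], measurable)
  also have "\<dots> = ennreal (Beta a (b + 1))
      * (\<integral>\<^sup>+\<tau>. ennreal (indicator {0<..} \<tau> * \<tau> powr (a + (b + 1) - 1)) * ennreal (heat_kernel \<tau> x / \<tau>) \<partial>lborel)"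
    using b by (intro nn_integral_powr_conv_Beta[OF a]) simp_all
  also have "(\<integral>\<^sup>+\<tau>. ennreal (indicator {0<..} \<tau> * \<tau> powr (a + (b + 1) - 1)) * ennreal (heat_kernel \<tau> x / \<tau>) \<partial>lborel)
      = riesz_kernel (a + b) x"
    unfolding riesz_kernel_def
  proof (intro nn_integral_cong)
    fix \<tau> :: real
    have "\<tau> powr (a + (b + 1) - 1) = \<tau> * \<tau> powr (a + b - 1)" if "\<tau> > 0"
      using that by (simp add: powr_mult_base)
    then show "ennreal (indicator {0<..} \<tau> * \<tau> powr (a + (b + 1) - 1)) * ennreal (heat_kernel \<tau> x / \<tau>)
        = ennreal (weighted_heat_kernel (a + b) \<tau> x)"
      by (cases "\<tau> > 0") (simp_all add: weighted_heat_kernel_def ennreal_mult[symmetric] heat_kernel_nonneg)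
  qed
  finally show ?thesis .
qed

lemma has_bochner_integral_Beta_heat_kernel:
  fixes x :: "'a::euclidean_space"
  defines "n \<equiv> real DIM('a)"
  assumes x: "x \<noteq> 0" and a: "a > 0" and b: "b \<ge> 0" and ab: "a + b < n / 2"
  shows "has_bochner_integral (lborel \<Otimes>\<^sub>M lborel)
      (\<lambda>p. indicator {0<..} (fst p) * indicator {0<..} (snd p)
         * (fst p powr (a - 1) * snd p powr b) * (heat_kernel (fst p + snd p) x / (fst p + snd p)))
      (Beta a (b + 1) * (riesz_const n (a + b) * norm x powr (2 * (a + b) - n)))"
proof (rule has_bochner_integral_nn_integral)
  show "(\<integral>\<^sup>+p. ennreal (indicator {0<..} (fst p) * indicator {0<..} (snd p)
         * (fst p powr (a - 1) * snd p powr b) * (heat_kernel (fst p + snd p) x / (fst p + snd p)))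
        \<partial>(lborel \<Otimes>\<^sub>M lborel))
      = ennreal (Beta a (b + 1) * (riesz_const n (a + b) * norm x powr (2 * (a + b) - n)))"
    using nn_integral_Beta_heat_kernel[OF a b, of x] riesz_kernel_eq[OF x ab[unfolded n_def]]
      a b riesz_const_pos[OF ab]
    by (simp add: n_def ennreal_mult[symmetric] Beta_def Gamma_real_pos)
qed (use a b riesz_const_pos[OF ab] in \<open>auto simp: heat_kernel_nonneg indicator_def Beta_def Gamma_real_pos\<close>)

lemma nn_integral_norm_weighted_heat_kernel_conv_moment:
  fixes x y :: "'a::euclidean_space"
  defines "n \<equiv> real DIM('a)"
  assumes y: "y \<noteq> 0" "y \<noteq> x" and a: "a < n / 2" and b: "b < n / 2"
  shows "(\<integral>\<^sup>+p. ennreal (norm ((weighted_heat_kernel a (fst p) y * weighted_heat_kernel b (snd p) (x - y)) *\<^sub>R (x - y)))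
           \<partial>(lborel \<Otimes>\<^sub>M lborel))
       = ennreal (riesz_const n a * riesz_const n b)
         * ennreal (norm y powr (2 * a - n) * norm (x - y) powr (2 * (b + 1 / 2) - n))"
proof -
  have xy: "x - y \<noteq> 0" using y by simp
  have "(\<integral>\<^sup>+p. ennreal (norm ((weighted_heat_kernel a (fst p) y * weighted_heat_kernel b (snd p) (x - y)) *\<^sub>R (x - y)))
      \<partial>(lborel \<Otimes>\<^sub>M lborel))
      = (\<integral>\<^sup>+p. ennreal (weighted_heat_kernel a (fst p) y * weighted_heat_kernel b (snd p) (x - y))
        * ennreal (norm (x - y)) \<partial>(lborel \<Otimes>\<^sub>M lborel))"
    by (intro nn_integral_cong) (simp add: abs_mult weighted_heat_kernel_nonneg ennreal_mult)
  also have "\<dots> = (\<integral>\<^sup>+p. ennreal (weighted_heat_kernel a (fst p) y * weighted_heat_kernel b (snd p) (x - y))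
      \<partial>(lborel \<Otimes>\<^sub>M lborel)) * ennreal (norm (x - y))"
    by (rule nn_integral_multc) measurable
  also have "\<dots> = ennreal (riesz_const n a * riesz_const n b * (norm y powr (2 * a - n) * norm (x - y) powr (2 * b - n)))
      * ennreal (norm (x - y))"
    using riesz_kernel_eq[OF y(1) a[unfolded n_def]] riesz_kernel_eq[OF xy b[unfolded n_def]]
      riesz_const_pos[OF a] riesz_const_pos[OF b]
    by (simp add: nn_integral_weighted_heat_kernel_pair n_def ennreal_mult[symmetric] mult_ac)
  also have "\<dots> = ennreal (riesz_const n a * riesz_const n b)
      * ennreal (norm y powr (2 * a - n) * norm (x - y) powr (2 * (b + 1 / 2) - n))"
    using xy riesz_const_pos[OF a] riesz_const_pos[OF b] powr_mult_base[of "norm (x - y)" "2 * b - n"]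
    by (simp add: ennreal_mult[symmetric] algebra_simps)
  finally show ?thesis .
qed

lemma integrable_weighted_heat_kernel_conv_moment:
  fixes x :: "'a::euclidean_space"
  defines "n \<equiv> real DIM('a)"
  assumes x: "x \<noteq> 0" and a: "a > 0" and b: "b \<ge> 0" and ab: "a + b + 1 / 2 < n / 2"
  shows "integrable (lborel \<Otimes>\<^sub>M (lborel \<Otimes>\<^sub>M lborel))
      (\<lambda>(y, p). (weighted_heat_kernel a (fst p) y * weighted_heat_kernel b (snd p) (x - y)) *\<^sub>R (x - y))"
proof (subst integrable_iff_bounded, intro conjI)
  have an: "a < n / 2" and bn: "b < n / 2" using a b ab by auto
  define C where "C = riesz_const n a * riesz_const n b"
  have "(\<integral>\<^sup>+q. ennreal (norm (case q of (y, p) \<Rightarrow> (weighted_heat_kernel a (fst p) y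
      * weighted_heat_kernel b (snd p) (x - y)) *\<^sub>R (x - y))) \<partial>(lborel \<Otimes>\<^sub>M (lborel \<Otimes>\<^sub>M lborel)))
      = (\<integral>\<^sup>+y. (\<integral>\<^sup>+p. ennreal (norm ((weighted_heat_kernel a (fst p) y
          * weighted_heat_kernel b (snd p) (x - y)) *\<^sub>R (x - y))) \<partial>(lborel \<Otimes>\<^sub>M lborel)) \<partial>lborel)"
    by (subst lborel_pair.P.nn_integral_fst[symmetric]) (simp_all, measurable)
  also have "\<dots> = (\<integral>\<^sup>+y. ennreal C * ennreal (norm y powr (2 * a - n) * norm (x - y) powr (2 * (b + 1 / 2) - n)) \<partial>lborel)"
  proof (rule nn_integral_cong_AE)
    show "AE y in lborel. (\<integral>\<^sup>+p. ennreal (norm ((weighted_heat_kernel a (fst p) y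
          * weighted_heat_kernel b (snd p) (x - y)) *\<^sub>R (x - y))) \<partial>(lborel \<Otimes>\<^sub>M lborel))
        = ennreal C * ennreal (norm y powr (2 * a - n) * norm (x - y) powr (2 * (b + 1 / 2) - n))"
      using AE_lborel_singleton[of 0] AE_lborel_singleton[of x]
    proof eventually_elim
      case (elim y)
      from nn_integral_norm_weighted_heat_kernel_conv_moment[OF elim an[unfolded n_def] bn[unfolded n_def]]
      show ?case by (simp add: C_def n_def)
    qed
  qed
  also have "\<dots> = ennreal C * (\<integral>\<^sup>+y. ennreal (norm y powr (2 * a - n) * norm (x - y) powr (2 * (b + 1 / 2) - n)) \<partial>lborel)"
    by (rule nn_integral_cmult) measurable
  also have "\<dots> < \<infinity>"
    using nn_integral_riesz_conv[OF x a, of "b + 1 / 2"] b ab by (simp add: n_def ennreal_mult_less_top)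
  finally show "(\<integral>\<^sup>+q. ennreal (norm (case q of (y, p) \<Rightarrow> (weighted_heat_kernel a (fst p) y
      * weighted_heat_kernel b (snd p) (x - y)) *\<^sub>R (x - y))) \<partial>(lborel \<Otimes>\<^sub>M (lborel \<Otimes>\<^sub>M lborel))) < \<infinity>" .
qed measurable

lemma integral_riesz_conv_vector:
  fixes x :: "'a::euclidean_space"
  defines "n \<equiv> real DIM('a)"
  assumes x: "x \<noteq> 0" and a: "a > 0" and b: "b \<ge> 0" and ab: "a + b + 1 / 2 < n / 2"
  shows "(\<integral>y. (norm y powr (2 * a - n) * norm (x - y) powr (2 * b - n)) *\<^sub>R (x - y) \<partial>lborel)
       = (Beta a (b + 1) * riesz_const n (a + b) / (riesz_const n a * riesz_const n b)
          * norm x powr (2 * (a + b) - n)) *\<^sub>R x"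
proof -
  interpret pair: pair_sigma_finite "lborel :: 'a measure" "lborel \<Otimes>\<^sub>M lborel :: (real \<times> real) measure"
    by (intro pair_sigma_finite.intro sigma_finite_lborel lborel_pair.P.sigma_finite_measure_axioms)
  have an: "a < n / 2" and bn: "b < n / 2" and abn: "a + b < n / 2" using a b ab by auto
  define C where "C = riesz_const n a * riesz_const n b"
  define \<Phi> where "\<Phi> y p = (weighted_heat_kernel a (fst p) y * weighted_heat_kernel b (snd p) (x - y)) *\<^sub>R (x - y)"
    for y and p :: "real \<times> real"
  define \<psi> where "\<psi> p = indicator {0<..} (fst p) * indicator {0<..} (snd p)
      * (fst p powr (a - 1) * snd p powr b) * (heat_kernel (fst p + snd p) x / (fst p + snd p))" for p :: "real \<times> real"
  have [measurable]: "(\<lambda>(y, p). \<Phi> y p) \<in> borel_measurable (lborel \<Otimes>\<^sub>M (lborel \<Otimes>\<^sub>M lborel))"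
    unfolding \<Phi>_def by measurable
  have borel_measurable_integral_pair: "(\<lambda>y. \<integral>p. \<Phi> y p \<partial>(lborel \<Otimes>\<^sub>M lborel)) \<in> borel_measurable lborel"
    by (rule lborel_pair.P.borel_measurable_lebesgue_integral) simp
  have \<psi>_integral: "has_bochner_integral (lborel \<Otimes>\<^sub>M lborel) \<psi>
      (Beta a (b + 1) * (riesz_const n (a + b) * norm x powr (2 * (a + b) - n)))"
    unfolding \<psi>_def n_def by (rule has_bochner_integral_Beta_heat_kernel[OF x a b abn[unfolded n_def]])
  have "(\<integral>y. (norm y powr (2 * a - n) * norm (x - y) powr (2 * b - n)) *\<^sub>R (x - y) \<partial>lborel)
      = (\<integral>y. (1 / C) *\<^sub>R (\<integral>p. \<Phi> y p \<partial>(lborel \<Otimes>\<^sub>M lborel)) \<partial>lborel)"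
  proof (rule integral_cong_AE)
    show "AE y in lborel. (norm y powr (2 * a - n) * norm (x - y) powr (2 * b - n)) *\<^sub>R (x - y)
        = (1 / C) *\<^sub>R (\<integral>p. \<Phi> y p \<partial>(lborel \<Otimes>\<^sub>M lborel))"
      using AE_lborel_singleton[of 0] AE_lborel_singleton[of x]
    proof eventually_elim
      case (elim y)
      then have "x - y \<noteq> 0" by simp
      from has_bochner_integral_weighted_heat_kernel_pair[OF elim(1) this an[unfolded n_def] bn[unfolded n_def]]
      show ?case
        using riesz_const_pos[OF an] riesz_const_pos[OF bn]
        by (simp add: \<Phi>_def has_bochner_integral_iff C_def n_def mult_ac)
    qed
  qed (simp_all add: borel_measurable_integral_pair)
  also have "\<dots> = (1 / C) *\<^sub>R (\<integral>p. (\<integral>y. \<Phi> y p \<partial>lborel) \<partial>(lborel \<Otimes>\<^sub>M lborel))"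
    using integrable_weighted_heat_kernel_conv_moment[OF x a b ab[unfolded n_def]]
    by (simp add: pair.Fubini_integral \<Phi>_def)
  also have "\<dots> = (1 / C) *\<^sub>R (\<integral>p. \<psi> p *\<^sub>R x \<partial>(lborel \<Otimes>\<^sub>M lborel))"
    by (simp add: \<Phi>_def \<psi>_def integral_weighted_heat_kernel_conv_moment)
  also have "\<dots> = (Beta a (b + 1) * riesz_const n (a + b) / C * norm x powr (2 * (a + b) - n)) *\<^sub>R x"
    using \<psi>_integral by (simp add: has_bochner_integral_iff)
  finally show ?thesis by (simp add: C_def)
qed

section \<open>Closed forms of a_k and b_k\<close>

definition acoef_const :: "real \<Rightarrow> nat \<Rightarrow> real" where
  "acoef_const n k = (-1) ^ (k + 1) * Gamma ((n - real k - 1) / 2)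
      / (pi powr (n / 2) * 2 ^ (k + 1) * Gamma ((real k + 1) / 2))"

definition bcoef_const :: "real \<Rightarrow> nat \<Rightarrow> real" where
  "bcoef_const n k = (-1) ^ k * Gamma ((n - real k) / 2)
      / (pi powr (n / 2) * 2 ^ (k + 1) * Gamma (real k / 2 + 1))"

lemma pi_powr_add_half: "pi powr ((n + 1) / 2) = pi powr (n / 2) * sqrt pi"
  by (simp add: add_divide_distrib powr_add powr_half_sqrt)

lemma acoef_const_0: "acoef_const n 0 = - Gamma ((n - 1) / 2) / (2 * pi powr ((n + 1) / 2))"
  by (simp add: acoef_const_def pi_powr_add_half Gamma_one_half_real mult_ac)

lemma acoef_const_Suc:
  assumes k: "real k + 2 < n"
  shows "acoef_const n (Suc k) = acoef_const n 0 * acoef_const n k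
      * (Beta (1 / 2) ((real k + 1) / 2) * riesz_const n (1 / 2 + (real k + 1) / 2)
         / (riesz_const n (1 / 2) * riesz_const n ((real k + 1) / 2)))"
proof -
  have quotient: "riesz_const n (1 / 2 + (real k + 1) / 2) / (riesz_const n (1 / 2) * riesz_const n ((real k + 1) / 2))
      = pi powr (n / 2) * Gamma ((n - real (Suc k) - 1) / 2) / (Gamma ((n - 1) / 2) * Gamma ((n - real k - 1) / 2))"
  proof -
    have args: "n / 2 - 1 / 2 = (n - 1) / 2" "(n - 1) / 2 - (real k + 1) / 2 = (n - real (Suc k) - 1) / 2"
      "n / 2 - (real k + 1) / 2 = (n - real k - 1) / 2"
      by (simp_all add: field_simps)
    have "1 / 2 < n / 2" "(real k + 1) / 2 < n / 2" using k by simp_all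
    from riesz_const_quotient[OF this] show ?thesis by (simp only: args)
  qed
  have Beta: "Beta (1 / 2) ((real k + 1) / 2) = sqrt pi * Gamma ((real k + 1) / 2) / Gamma ((real (Suc k) + 1) / 2)"
    by (simp add: Beta_def Gamma_one_half_real add_divide_distrib)
  \<comment> \<open>Gamma values and powers of pi enter as opaque positive reals: the step is pure field arithmetic.\<close>
  have identity: "(-1) ^ (Suc k + 1) * X / (P * 2 ^ (Suc k + 1) * Y)
      = (- G1 / (2 * (P * sp))) * ((-1) ^ (k + 1) * Z / (P * 2 ^ (k + 1) * W)) * ((sp * W / Y) * (P * X / (G1 * Z)))"
    if "G1 > 0" "Z > 0" "W > 0" "Y > 0" "P > 0" "sp > 0" for X Y Z W G1 P sp :: real
    using that by (simp add: field_simps)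
  have "Gamma ((n - real k - 1) / 2) > 0" "Gamma ((real (Suc k) + 1) / 2) > 0"
    "Gamma ((n - 1) / 2) > 0" "Gamma ((real k + 1) / 2) > 0"
    using k by (simp_all add: Gamma_real_pos)
  then have "acoef_const n (Suc k) = acoef_const n 0 * acoef_const n k
      * ((sqrt pi * Gamma ((real k + 1) / 2) / Gamma ((real (Suc k) + 1) / 2))
         * (pi powr (n / 2) * Gamma ((n - real (Suc k) - 1) / 2) / (Gamma ((n - 1) / 2) * Gamma ((n - real k - 1) / 2))))"
    unfolding acoef_const_0 pi_powr_add_half acoef_const_def[of n k] acoef_const_def[of n "Suc k"]
    by (intro identity) auto
  then show ?thesis
    unfolding times_divide_eq_right[symmetric] quotient Beta .
qed

lemma bcoef_const_Suc:
  assumes k: "real k + 2 < n"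
  shows "bcoef_const n (Suc k) = acoef_const n 0 * bcoef_const n k
      * (Beta (1 / 2) (real k / 2 + 1) * riesz_const n (1 / 2 + real k / 2)
         / (riesz_const n (1 / 2) * riesz_const n (real k / 2)))"
proof -
  have quotient: "riesz_const n (1 / 2 + real k / 2) / (riesz_const n (1 / 2) * riesz_const n (real k / 2))
      = pi powr (n / 2) * Gamma ((n - real (Suc k)) / 2) / (Gamma ((n - 1) / 2) * Gamma ((n - real k) / 2))"
  proof -
    have args: "n / 2 - 1 / 2 = (n - 1) / 2" "(n - 1) / 2 - real k / 2 = (n - real (Suc k)) / 2"
      "n / 2 - real k / 2 = (n - real k) / 2"
      by (simp_all add: field_simps)
    have "1 / 2 < n / 2" "real k / 2 < n / 2" using k by simp_all
    from riesz_const_quotient[OF this] show ?thesis by (simp only: args)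
  qed
  have Beta: "Beta (1 / 2) (real k / 2 + 1) = sqrt pi * Gamma (real k / 2 + 1) / Gamma (real (Suc k) / 2 + 1)"
    by (simp add: Beta_def Gamma_one_half_real add_divide_distrib)
  have identity: "(-1) ^ Suc k * X / (P * 2 ^ (Suc k + 1) * Y)
      = (- G1 / (2 * (P * sp))) * ((-1) ^ k * Z / (P * 2 ^ (k + 1) * W)) * ((sp * W / Y) * (P * X / (G1 * Z)))"
    if "G1 > 0" "Z > 0" "W > 0" "Y > 0" "P > 0" "sp > 0" for X Y Z W G1 P sp :: real
    using that by (simp add: field_simps)
  have "Gamma ((n - real k) / 2) > 0" "Gamma (real (Suc k) / 2 + 1) > 0"
    "Gamma ((n - 1) / 2) > 0" "Gamma (real k / 2 + 1) > 0"
    using k by (simp_all add: Gamma_real_pos add_pos_nonneg del: of_nat_Suc)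
  then have "bcoef_const n (Suc k) = acoef_const n 0 * bcoef_const n k
      * ((sqrt pi * Gamma (real k / 2 + 1) / Gamma (real (Suc k) / 2 + 1))
         * (pi powr (n / 2) * Gamma ((n - real (Suc k)) / 2) / (Gamma ((n - 1) / 2) * Gamma ((n - real k) / 2))))"
    unfolding acoef_const_0 pi_powr_add_half bcoef_const_def[of n k] bcoef_const_def[of n "Suc k"]
    by (intro identity) auto
  then show ?thesis
    unfolding times_divide_eq_right[symmetric] quotient Beta .
qed

lemma azero_eq:
  assumes "CARD('m) \<ge> 2"
  shows "azero (x :: real^'m) = acoef_const (real CARD('m)) 0 * norm x powr (1 - real CARD('m))"
proof -
  define n where "n = real CARD('m)"
  have n: "n \<ge> 2" using assms by (simp add: n_def)
  have "(n - 1) / 2 \<notin> \<int>\<^sub>\<le>\<^sub>0" using n by (auto elim!: nonpos_Ints_cases)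
  moreover have "(n + 1) / 2 = (n - 1) / 2 + 1" by (simp add: field_simps)
  ultimately have Gamma_eq: "Gamma ((n + 1) / 2) = (n - 1) / 2 * Gamma ((n - 1) / 2)"
    by (metis Gamma_plus1)
  have sigma_eq: "sigma (CARD('m) + 1) = 2 * pi powr ((n + 1) / 2) / Gamma ((n + 1) / 2)"
    by (simp add: sigma_def n_def add.commute)
  have "Gamma ((n - 1) / 2) > 0" using n by (simp add: Gamma_real_pos)
  then have "- 2 / ((n - 1) * sigma (CARD('m) + 1)) = acoef_const n 0"
    unfolding sigma_eq Gamma_eq acoef_const_0 using n by (simp add: field_simps)
  moreover have "norm x powr (1 - n) = 1 / norm x powr (n - 1)"
    using powr_minus_divide[of "norm x" "n - 1"] by simp
  ultimately show ?thesis
    by (simp add: azero_def n_def)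
qed

lemma borel_measurable_azero[measurable]: "azero \<in> borel_measurable borel"
  unfolding azero_def[abs_def] by measurable

lemma borel_measurable_acoef[measurable]: "acoef k \<in> borel_measurable borel"
proof (induction k)
  case (Suc k)
  note [measurable] = Suc.IH
  have "(\<lambda>x. LINT y|lborel. azero y * acoef k (x - y)) \<in> borel_measurable (borel :: (real^'a) measure)"
    by measurable
  then show ?case by (simp add: acoef.simps(2)[abs_def])
qed (simp add: acoef.simps(1)[abs_def])

lemma borel_measurable_bcoef[measurable]: "bcoef k \<in> borel_measurable borel"
proof (induction k)
  case 0
  have "(\<lambda>x::real^'a. (1 / sigma CARD('a) / norm x powr real CARD('a)) *\<^sub>R x) \<in> borel_measurable borel"
    by measurable
  then show ?case by (simp add: bcoef.simps(1)[abs_def])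
next
  case (Suc k)
  note [measurable] = Suc.IH
  have "(\<lambda>x. LINT y|lborel. azero y *\<^sub>R bcoef k (x - y)) \<in> borel_measurable (borel :: (real^'a) measure)"
    by measurable
  then show ?case by (simp add: bcoef.simps(2)[abs_def])
qed

lemma acoef_eq:
  fixes x :: "real^'m"
  assumes "k + 2 \<le> CARD('m)" and "x \<noteq> 0"
  shows "acoef k x = acoef_const (real CARD('m)) k * norm x powr (real k + 1 - real CARD('m))"
  using assms
proof (induction k arbitrary: x)
  case 0
  then show ?case by (simp add: azero_eq)
next
  case (Suc k)
  define n where "n = real CARD('m)"
  have k: "real k + 2 < n" using Suc.prems by (simp add: n_def)
  have exponents: "2 * (1 / 2) - n = 1 - n" "2 * ((real k + 1) / 2) - n = real k + 1 - n"
    "2 * (1 / 2 + (real k + 1) / 2) - n = real (Suc k) + 1 - n"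
    by simp_all
  have "acoef (Suc k) x
      = (LINT y|lborel. (acoef_const n 0 * acoef_const n k)
          * (norm y powr (2 * (1 / 2) - n) * norm (x - y) powr (2 * ((real k + 1) / 2) - n)))"
    unfolding acoef.simps
  proof (rule integral_cong_AE)
    show "AE y in lborel. azero y * acoef k (x - y) = acoef_const n 0 * acoef_const n k
        * (norm y powr (2 * (1 / 2) - n) * norm (x - y) powr (2 * ((real k + 1) / 2) - n))"
      using AE_lborel_singleton[of x]
      unfolding exponents
      by eventually_elim (use Suc in \<open>simp add: azero_eq n_def[symmetric] mult_ac\<close>)
  qed simp_all
  also have "\<dots> = acoef_const n 0 * acoef_const n k
      * (Beta (1 / 2) ((real k + 1) / 2) * riesz_const n (1 / 2 + (real k + 1) / 2)
         / (riesz_const n (1 / 2) * riesz_const n ((real k + 1) / 2))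
         * norm x powr (2 * (1 / 2 + (real k + 1) / 2) - n))"
  proof -
    have "1 / 2 + (real k + 1) / 2 < real DIM(real^'m) / 2" using k by (simp add: n_def field_simps)
    from integral_riesz_conv[OF Suc.prems(2) _ _ this] show ?thesis by (simp add: n_def)
  qed
  also have "\<dots> = acoef_const n (Suc k) * norm x powr (real (Suc k) + 1 - n)"
    unfolding exponents by (simp add: acoef_const_Suc[OF k] mult_ac)
  finally show ?case by (simp add: n_def)
qed

lemma bcoef_eq:
  fixes x :: "real^'m"
  assumes "k + 2 \<le> CARD('m)" and "x \<noteq> 0"
  shows "bcoef k x = (bcoef_const (real CARD('m)) k * norm x powr (real k - real CARD('m))) *\<^sub>R x"
  using assms
proof (induction k arbitrary: x)
  case 0
  have "norm x powr (- real CARD('m)) = 1 / norm x powr real CARD('m)"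
    by (rule powr_minus_divide)
  then show ?case by (simp add: bcoef_const_def sigma_def)
next
  case (Suc k)
  define n where "n = real CARD('m)"
  have k: "real k + 2 < n" using Suc.prems by (simp add: n_def)
  have exponents: "2 * (1 / 2) - n = 1 - n" "2 * (real k / 2) - n = real k - n"
    "2 * (1 / 2 + real k / 2) - n = real (Suc k) - n"
    by simp_all
  have "bcoef (Suc k) x
      = (LINT y|lborel. (acoef_const n 0 * bcoef_const n k)
          *\<^sub>R ((norm y powr (2 * (1 / 2) - n) * norm (x - y) powr (2 * (real k / 2) - n)) *\<^sub>R (x - y)))"
    unfolding bcoef.simps
  proof (rule integral_cong_AE)
    show "AE y in lborel. azero y *\<^sub>R bcoef k (x - y) = (acoef_const n 0 * bcoef_const n k)
        *\<^sub>R ((norm y powr (2 * (1 / 2) - n) * norm (x - y) powr (2 * (real k / 2) - n)) *\<^sub>R (x - y))"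
      using AE_lborel_singleton[of x]
      unfolding exponents
      by eventually_elim (use Suc in \<open>simp add: azero_eq n_def[symmetric] mult_ac\<close>)
  qed simp_all
  also have "\<dots> = (acoef_const n 0 * bcoef_const n k) *\<^sub>R
      (LINT y|lborel. (norm y powr (2 * (1 / 2) - n) * norm (x - y) powr (2 * (real k / 2) - n)) *\<^sub>R (x - y))"
    by (rule integral_scaleR_right)
  also have "\<dots> = (acoef_const n 0 * bcoef_const n k
      * (Beta (1 / 2) (real k / 2 + 1) * riesz_const n (1 / 2 + real k / 2)
         / (riesz_const n (1 / 2) * riesz_const n (real k / 2))
         * norm x powr (2 * (1 / 2 + real k / 2) - n))) *\<^sub>R x"
  proof -
    have "1 / 2 + real k / 2 + 1 / 2 < real DIM(real^'m) / 2" using k by (simp add: n_def field_simps)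
    from integral_riesz_conv_vector[OF Suc.prems(2) _ _ this] show ?thesis by (simp add: n_def)
  qed
  also have "\<dots> = (bcoef_const n (Suc k) * norm x powr (real (Suc k) - n)) *\<^sub>R x"
    unfolding exponents by (simp add: bcoef_const_Suc[OF k] mult_ac)
  finally show ?case by (simp add: n_def)
qed

lemma prod_mult_Gamma_diff:
  fixes z :: real
  assumes "z - real j > 0"
  shows "(\<Prod>i = 1..j. 2 * z - 2 * real i) * Gamma (z - real j) = 2 ^ j * Gamma z"
  using assms
proof (induction j)
  case (Suc j)
  have "z - real j = (z - real (Suc j)) + 1" by simp
  moreover have "z - real (Suc j) \<notin> \<int>\<^sub>\<le>\<^sub>0" using Suc.prems by (auto elim!: nonpos_Ints_cases)
  ultimately have "Gamma (z - real j) = (z - real (Suc j)) * Gamma (z - real (Suc j))"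
    by (metis Gamma_plus1)
  then have "(\<Prod>i = 1..Suc j. 2 * z - 2 * real i) * Gamma (z - real (Suc j))
      = 2 * ((\<Prod>i = 1..j. 2 * z - 2 * real i) * Gamma (z - real j))"
    by (simp add: prod.nat_ivl_Suc' mult_ac)
  also have "\<dots> = 2 ^ Suc j * Gamma z"
    using Suc by simp
  finally show ?case .
qed simp

lemma acoef_const_odd:
  assumes j: "j \<ge> 1" and N: "real N \<ge> 2 * real j + 1"
  shows "acoef_const (real N) (2 * j - 1) = 1 / (2 ^ (j - 1) * pi ^ j) * (1 / (\<Prod>i = 1..j. real N - 2 * real i))
           * (1 / sigma N) * (pi powr (real (2 * j) / 2) / Gamma (real (2 * j) / 2))"
proof -
  define n where "n = real N"
  have real_diff: "real (2 * j - 1) = 2 * real j - 1" using j by (simp add: of_nat_diff)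
  have prod_Gamma: "(\<Prod>i = 1..j. n - 2 * real i) * Gamma (n / 2 - real j) = 2 ^ j * Gamma (n / 2)"
    using prod_mult_Gamma_diff[of "n / 2" j] N by (simp add: n_def)
  have Gamma_pos: "Gamma (n / 2 - real j) > 0" "Gamma (n / 2) > 0" "Gamma (real j) > 0" using N j by (auto simp: n_def)
  have prod_eq: "(\<Prod>i = 1..j. n - 2 * real i) = 2 ^ j * Gamma (n / 2) / Gamma (n / 2 - real j)"
    using prod_Gamma Gamma_pos by (simp add: eq_divide_eq)
  have arg1: "(n - (2 * real j - 1) - 1) / 2 = n / 2 - real j" by (simp add: field_simps)
  have arg2: "(2 * real j - 1 + 1) / 2 = real j" by simp
  have sigma_eq: "sigma N = 2 * pi powr (n / 2) / Gamma (n / 2)" by (simp add: sigma_def n_def)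
  have half_even: "real (2 * j) / 2 = real j" by simp
  have sign_eq: "(-1::real) ^ (2 * j - 1 + 1) = 1" using j by simp
  have two_power: "(2::real) ^ (2 * j - 1 + 1) = 2 ^ (j - 1) * 2 ^ j * 2"
  proof -
    have "(2::real) ^ (j - 1) * 2 ^ j * 2 = 2 ^ ((j - 1) + j + 1)" by (simp only: power_add power_one_right)
    moreover have "(j - 1) + j + 1 = 2 * j - 1 + 1" using j by simp
    ultimately show ?thesis by simp
  qed
  show ?thesis
    unfolding acoef_const_def n_def[symmetric] real_diff arg1 arg2 sigma_eq half_even powr_realpow[OF pi_gt_zero] prod_eq sign_eq two_power
    using Gamma_pos by (simp add: field_simps)
qed

lemma bcoef_const_odd:
  assumes j: "j \<ge> 1" and N: "real N \<ge> 2 * real j + 1"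
  shows "bcoef_const (real N) (2 * j - 1) = - 1 / (2 ^ (j - 1) * pi ^ j) * (1 / (\<Prod>i = 1..j. real N - 2 * real i + 1))
           * (1 / sigma (N + 1)) * (pi powr ((real (2 * j) + 1) / 2) / Gamma ((real (2 * j) + 1) / 2))"
proof -
  define n where "n = real N"
  obtain j' where j': "j = Suc j'" using j by (cases j) auto
  have real_diff: "real (2 * j - 1) = 2 * real j - 1" using j by (simp add: of_nat_diff)
  have prod_Gamma: "(\<Prod>i = 1..j. 2 * ((n + 1) / 2) - 2 * real i) * Gamma ((n + 1) / 2 - real j) = 2 ^ j * Gamma ((n + 1) / 2)"
    using N by (intro prod_mult_Gamma_diff) (simp add: n_def)
  have prod_reindex: "(\<Prod>i = 1..j. 2 * ((n + 1) / 2) - 2 * real i) = (\<Prod>i = 1..j. n - 2 * real i + 1)"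
    by (intro prod.cong) auto
  have Gamma_pos: "Gamma ((n + 1) / 2 - real j) > 0" "Gamma ((n + 1) / 2) > 0" "Gamma (real j + 1 / 2) > 0" using N j by (auto simp: n_def)
  have prod_eq: "(\<Prod>i = 1..j. n - 2 * real i + 1) = 2 ^ j * Gamma ((n + 1) / 2) / Gamma ((n + 1) / 2 - real j)"
    using prod_Gamma Gamma_pos unfolding prod_reindex by (simp add: eq_divide_eq)
  have arg1: "(n - (2 * real j - 1)) / 2 = (n + 1) / 2 - real j" by (simp add: field_simps)
  have arg2: "(2 * real j - 1) / 2 + 1 = real j + 1 / 2" by (simp add: field_simps)
  have arg3: "(real (2 * j) + 1) / 2 = real j + 1 / 2" by simp
  have sigma_eq: "sigma (N + 1) = 2 * pi powr ((n + 1) / 2) / Gamma ((n + 1) / 2)" by (simp add: sigma_def n_def add.commute)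
  have pi_power: "pi powr (real j + 1 / 2) = pi ^ j * sqrt pi"
    by (simp add: powr_add powr_half_sqrt powr_realpow[OF pi_gt_zero])
  have sign_eq: "(-1::real) ^ (2 * j - 1) = -1" using j' by simp
  have two_power: "(2::real) ^ (2 * j - 1 + 1) = 2 ^ (j - 1) * 2 ^ j * 2"
  proof -
    have "(2::real) ^ (j - 1) * 2 ^ j * 2 = 2 ^ ((j - 1) + j + 1)" by (simp only: power_add power_one_right)
    moreover have "(j - 1) + j + 1 = 2 * j - 1 + 1" using j by simp
    ultimately show ?thesis by simp
  qed
  have pi_pos: "pi powr (n / 2) > 0" "sqrt pi > 0" by auto
  show ?thesis
    unfolding bcoef_const_def n_def[symmetric] real_diff arg1 arg2 arg3 sigma_eq pi_power prod_eq sign_eq two_power pi_powr_add_half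
    using Gamma_pos pi_pos by (simp add: field_simps)
qed

lemma acoef_const_even:
  assumes j: "j \<ge> 1" and N: "real N \<ge> 2 * real j + 2"
  shows "acoef_const (real N) (2 * j) = - 1 / (2 ^ (j - 1) * pi ^ j) * (1 / (\<Prod>i = 0..j. real N - 2 * real i - 1))
           * (1 / sigma (N + 1)) * (pi powr (real (2 * j+1) / 2) / Gamma (real (2 * j+1) / 2))"
proof -
  define n where "n = real N"
  have prod_Gamma: "(\<Prod>i = 1..Suc j. 2 * ((n + 1) / 2) - 2 * real i) * Gamma ((n + 1) / 2 - real (Suc j)) = 2 ^ (Suc j) * Gamma ((n + 1) / 2)"
    using N by (intro prod_mult_Gamma_diff) (simp add: n_def)
  have prod_reindex: "(\<Prod>i = 1..Suc j. 2 * ((n + 1) / 2) - 2 * real i) = (\<Prod>i = 0..j. n - 2 * real i - 1)"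
  proof -
    have "(\<Prod>i = 1..Suc j. 2 * ((n + 1) / 2) - 2 * real i) = (\<Prod>i = Suc 0..Suc j. 2 * ((n + 1) / 2) - 2 * real i)" by simp
    also have "\<dots> = (\<Prod>i = 0..j. 2 * ((n + 1) / 2) - 2 * real (Suc i))"
      by (rule prod.atLeast_Suc_atMost_Suc_shift[unfolded comp_def])
    also have "\<dots> = (\<Prod>i = 0..j. n - 2 * real i - 1)"
      by (intro prod.cong) (auto simp: field_simps)
    finally show ?thesis .
  qed
  have Gamma_pos: "Gamma ((n + 1) / 2 - real (Suc j)) > 0" "Gamma ((n + 1) / 2) > 0" "Gamma (real j + 1 / 2) > 0" using N j by (auto simp: n_def)
  have prod_eq: "(\<Prod>i = 0..j. n - 2 * real i - 1) = 2 ^ (Suc j) * Gamma ((n + 1) / 2) / Gamma ((n + 1) / 2 - real (Suc j))"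
    using prod_Gamma Gamma_pos unfolding prod_reindex by (simp add: eq_divide_eq)
  have arg1: "(n - real (2 * j) - 1) / 2 = (n + 1) / 2 - real (Suc j)" by (simp add: field_simps)
  have arg2: "(real (2 * j) + 1) / 2 = real j + 1 / 2" by simp
  have arg3: "real (2 * j+1) / 2 = real j + 1 / 2" by simp
  have sigma_eq: "sigma (N + 1) = 2 * pi powr ((n + 1) / 2) / Gamma ((n + 1) / 2)" by (simp add: sigma_def n_def add.commute)
  have pi_power: "pi powr (real j + 1 / 2) = pi ^ j * sqrt pi"
    by (simp add: powr_add powr_half_sqrt powr_realpow[OF pi_gt_zero])
  have sign_eq: "(-1::real) ^ (2 * j + 1) = -1" by simp
  have two_power: "(2::real) ^ (2 * j + 1) = 2 ^ (j - 1) * 2 ^ (Suc j) * 2"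
  proof -
    have "(2::real) ^ (j - 1) * 2 ^ (Suc j) * 2 = 2 ^ ((j - 1) + Suc j + 1)" by (simp only: power_add power_one_right)
    moreover have "(j - 1) + Suc j + 1 = 2 * j + 1" using j by simp
    ultimately show ?thesis by simp
  qed
  have pi_pos: "pi powr (n / 2) > 0" "sqrt pi > 0" by auto
  show ?thesis
    unfolding acoef_const_def n_def[symmetric] arg1 arg2 arg3 sigma_eq pi_power prod_eq sign_eq two_power pi_powr_add_half
    using Gamma_pos pi_pos by (simp add: field_simps)
qed

lemma bcoef_const_even:
  assumes j: "j \<ge> 1" and N: "real N \<ge> 2 * real j + 2"
  shows "bcoef_const (real N) (2 * j) = 1 / (2 ^ j * pi ^ (j + 1)) * (1 / (\<Prod>i = 1..j. real N - 2 * real i))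
           * (1 / sigma N) * (pi powr ((real (2 * j+1) + 1) / 2) / Gamma ((real (2 * j+1) + 1) / 2))"
proof -
  define n where "n = real N"
  have prod_Gamma: "(\<Prod>i = 1..j. n - 2 * real i) * Gamma (n / 2 - real j) = 2 ^ j * Gamma (n / 2)"
    using prod_mult_Gamma_diff[of "n / 2" j] N by (simp add: n_def)
  have Gamma_pos: "Gamma (n / 2 - real j) > 0" "Gamma (n / 2) > 0" "Gamma (real j + 1) > 0" using N j by (auto simp: n_def)
  have prod_eq: "(\<Prod>i = 1..j. n - 2 * real i) = 2 ^ j * Gamma (n / 2) / Gamma (n / 2 - real j)"
    using prod_Gamma Gamma_pos by (simp add: eq_divide_eq)
  have arg1: "(n - real (2 * j)) / 2 = n / 2 - real j" by (simp add: field_simps)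
  have arg2: "real (2 * j) / 2 + 1 = real j + 1" by simp
  have arg3: "(real (2 * j+1) + 1) / 2 = real (j + 1)" by simp
  have sigma_eq: "sigma N = 2 * pi powr (n / 2) / Gamma (n / 2)" by (simp add: sigma_def n_def)
  have sign_eq: "(-1::real) ^ (2 * j) = 1" by simp
  have two_power: "(2::real) ^ (2 * j + 1) = 2 ^ j * 2 ^ j * 2"
  proof -
    have "(2::real) ^ j * 2 ^ j * 2 = 2 ^ (j + j + 1)" by (simp only: power_add power_one_right)
    moreover have "j + j + 1 = 2 * j + 1" by simp
    ultimately show ?thesis by simp
  qed
  have pi_pos: "pi powr (n / 2) > 0" by auto
  show ?thesis
    unfolding bcoef_const_def n_def[symmetric] arg1 arg2 arg3 sigma_eq powr_realpow[OF pi_gt_zero] prod_eq sign_eq two_power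
    using Gamma_pos pi_pos by (simp add: field_simps)
qed

lemma acoef_odd:
  fixes x :: "real^'m"
  assumes j: "j \<ge> 1" and m: "CARD('m) \<ge> 2 * j + 1" and x: "x \<noteq> 0"
  shows "acoef (2 * j - 1) x =
           1 / (2 ^ (j - 1) * pi ^ j) * (1 / (\<Prod>i = 1..j. real CARD('m) - 2 * real i))
           * (1 / sigma CARD('m)) * Tstar (2 * j) x"
proof -
  have k: "2 * j - 1 + 2 \<le> CARD('m)" and m': "real CARD('m) \<ge> 2 * real j + 1"
    using m j by auto
  have exponent: "real (2 * j - 1) + 1 = real (2 * j)" using j by (simp add: of_nat_diff)
  show ?thesis
    unfolding acoef_eq[OF k x] acoef_const_odd[OF j m'] Tstar_def exponent by (simp add: mult_ac)
qed

lemma bcoef_odd: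
  fixes x :: "real^'m"
  assumes j: "j \<ge> 1" and m: "CARD('m) \<ge> 2 * j + 1" and x: "x \<noteq> 0"
  shows "bcoef (2 * j - 1) x =
           (- 1 / (2 ^ (j - 1) * pi ^ j) * (1 / (\<Prod>i = 1..j. real CARD('m) - 2 * real i + 1))
           * (1 / sigma (CARD('m) + 1))) *\<^sub>R Ustar (2 * j) x"
proof -
  have k: "2 * j - 1 + 2 \<le> CARD('m)" and m': "real CARD('m) \<ge> 2 * real j + 1"
    using m j by auto
  have "real (2 * j) - real CARD('m) = (real (2 * j - 1) - real CARD('m)) + 1" using j by (simp add: of_nat_diff)
  then have "norm x powr (real (2 * j) - real CARD('m)) = norm x powr (real (2 * j - 1) - real CARD('m)) * norm x powr 1"
    by (simp only: powr_add)
  then have exponent: "norm x powr (real (2 * j) - real CARD('m)) / norm x = norm x powr (real (2 * j - 1) - real CARD('m))"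
    using x by simp
  show ?thesis
    unfolding bcoef_eq[OF k x] bcoef_const_odd[OF j m'] Ustar_def times_divide_eq_right[symmetric] exponent
    by (simp add: mult_ac)
qed

lemma acoef_even:
  fixes x :: "real^'m"
  assumes j: "j \<ge> 1" and m: "CARD('m) \<ge> 2 * j + 2" and x: "x \<noteq> 0"
  shows "acoef (2 * j) x =
           - 1 / (2 ^ (j - 1) * pi ^ j) * (1 / (\<Prod>i = 0..j. real CARD('m) - 2 * real i - 1))
           * (1 / sigma (CARD('m) + 1)) * Tstar (2 * j + 1) x"
proof -
  have k: "2 * j + 2 \<le> CARD('m)" and m': "real CARD('m) \<ge> 2 * real j + 2"
    using m by auto
  have exponent: "real (2 * j) + 1 = real (2 * j + 1)" by simp
  show ?thesis
    unfolding acoef_eq[OF k x] acoef_const_even[OF j m'] Tstar_def exponent by (simp add: mult_ac)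
qed

lemma bcoef_even:
  fixes x :: "real^'m"
  assumes j: "j \<ge> 1" and m: "CARD('m) \<ge> 2 * j + 2" and x: "x \<noteq> 0"
  shows "bcoef (2 * j) x =
           (1 / (2 ^ j * pi ^ (j + 1)) * (1 / (\<Prod>i = 1..j. real CARD('m) - 2 * real i))
           * (1 / sigma CARD('m))) *\<^sub>R Ustar (2 * j + 1) x"
proof -
  have k: "2 * j + 2 \<le> CARD('m)" and m': "real CARD('m) \<ge> 2 * real j + 2"
    using m by auto
  have "real (2 * j + 1) - real CARD('m) = (real (2 * j) - real CARD('m)) + 1" by simp
  then have "norm x powr (real (2 * j + 1) - real CARD('m)) = norm x powr (real (2 * j) - real CARD('m)) * norm x powr 1"
    by (simp only: powr_add)
  then have exponent: "norm x powr (real (2 * j + 1) - real CARD('m)) / norm x = norm x powr (real (2 * j) - real CARD('m))"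
    using x by simp
  show ?thesis
    unfolding bcoef_eq[OF k x] bcoef_const_even[OF j m'] Ustar_def times_divide_eq_right[symmetric] exponent
    by (simp add: mult_ac)
qed

theorem mainTheorem17:
  fixes j :: nat
  assumes "j \<ge> 1"
  shows "(CARD('m) \<ge> 2 * j + 1 \<longrightarrow>
           (\<forall>x :: real^'m. x \<noteq> 0 \<longrightarrow>
              acoef (2 * j - 1) x =
                1 / (2 ^ (j - 1) * pi ^ j)
                * (1 / (\<Prod>i = 1..j. real CARD('m) - 2 * real i))
                * (1 / sigma CARD('m)) * Tstar (2 * j) x
            \<and> bcoef (2 * j - 1) x =
                (- 1 / (2 ^ (j - 1) * pi ^ j)
                * (1 / (\<Prod>i = 1..j. real CARD('m) - 2 * real i + 1))
                * (1 / sigma (CARD('m) + 1))) *\<^sub>R Ustar (2 * j) x))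
       \<and> (CARD('m) \<ge> 2 * j + 2 \<longrightarrow>
           (\<forall>x :: real^'m. x \<noteq> 0 \<longrightarrow>
              acoef (2 * j) x =
                - 1 / (2 ^ (j - 1) * pi ^ j)
                * (1 / (\<Prod>i = 0..j. real CARD('m) - 2 * real i - 1))
                * (1 / sigma (CARD('m) + 1)) * Tstar (2 * j + 1) x
            \<and> bcoef (2 * j) x =
                (1 / (2 ^ j * pi ^ (j + 1))
                * (1 / (\<Prod>i = 1..j. real CARD('m) - 2 * real i))
                * (1 / sigma CARD('m))) *\<^sub>R Ustar (2 * j + 1) x))"
  using acoef_odd[OF assms] bcoef_odd[OF assms] acoef_even[OF assms] bcoef_even[OF assms] by blast

end
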